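(* Let $s_1\in\mathbb{Q}$ with $0<s_1<1$, $u_1=\frac{1-s_1^2}{2s_1}$, let $m\in\mathbb{Q}$ with $0<m<\sqrt2-1$, and let $\alpha\in(0,\pi/4)$ be the angle with $\cos\alpha=\frac{1-m^2}{1+m^2}$, $\sin\alpha=\frac{2m}{1+m^2}$. Define $$s_2=2u_1\cot(2\alpha),\qquad s_3=\frac{\cos\alpha-\sin\alpha}{s_2},\qquad s_4=\frac{s_2}{\cos\alpha+\sin\alpha}.$$ Then $s_3\neq s_4$. (Equivalently, in the family of rational leaning boxes of Theorem 1 the two diagonals $c_1,c_2$ of the parallelogram face are never equal, so this family contains no perfect cuboid.)
   Context: In the family of Theorem 1 one sets $u_k=\frac{1-s_k^2}{2s_k}$, and the parallelogram face of the leaning box has diagonals proportional to $u_3$ and $u_4$; $s_3=s_4$ is equivalent to $u_3=u_4$, i.e. to that face being a rectangle. *)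

theory Defs
  imports "HOL-Analysis.Analysis"
begin

end

theory Submission
  imports Defs "HOL-Computational_Algebra.Nth_Powers"
begin

text \<open>
  Clearing denominators, \<open>s\<^sub>3 = s\<^sub>4\<close> means \<open>s\<^sub>2\<^sup>2 = cos\<^sup>2 \<alpha> - sin\<^sup>2 \<alpha> = cos 2\<alpha>\<close>, i.e.
  \<open>sin\<^sup>2 2\<alpha> = 4 u\<^sub>1\<^sup>2 cos 2\<alpha>\<close>. Writing \<open>cos \<alpha> = A/D\<close>, \<open>sin \<alpha> = B/D\<close> with \<open>A = 1 - m\<^sup>2\<close>, \<open>B = 2m\<close>,
  \<open>D = 1 + m\<^sup>2 = \<surd>(A\<^sup>2 + B\<^sup>2)\<close>, this becomes \<open>A\<^sup>4 - B\<^sup>4 = (AB/u\<^sub>1)\<^sup>2\<close>, a nontrivial rational point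
  on \<open>x\<^sup>4 - y\<^sup>4 = z\<^sup>2\<close>. Fermat showed by infinite descent that there is none.
\<close>

lemma coprime_mult_eq_square_nat:
  fixes a b c :: nat
  assumes "coprime a b" "a * b = c^2"
  shows "\<exists>u v. a = u^2 \<and> b = v^2"
proof (cases "a = 0 \<or> b = 0")
  case True
  with assms(1) have "a = 0 \<and> b = 1 \<or> a = 1 \<and> b = 0" by auto
  then show ?thesis by (metis one_power2 zero_power2)
next
  case False
  have "is_nth_power 2 (a * b)" using assms(2) by auto
  from is_nth_power_mult_coprime_natD[OF assms(1) this] False
  show ?thesis by (auto elim!: is_nth_powerE)
qed

lemma pythagorean_coprime_hypotenuse:
  fixes a b c :: nat
  assumes "a^2 + b^2 = c^2" "coprime a b"
  shows "coprime a c"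
proof (rule coprimeI)
  fix d assume d: "d dvd a" "d dvd c"
  then have "d dvd c^2 - a^2" by (intro dvd_diff_nat) (auto simp: power2_eq_square)
  then have "d dvd b^2" using assms(1) by (metis add_diff_cancel_left')
  moreover have "coprime a (b^2)" using assms(2) by simp
  ultimately show "is_unit d" using d(1) coprime_common_divisor by blast
qed

lemma primitive_pythagorean_triple:
  fixes a b c :: nat
  assumes "a^2 + b^2 = c^2" "coprime a b" "even b"
  shows "\<exists>m n. a = m^2 - n^2 \<and> b = 2 * m * n \<and> c = m^2 + n^2 \<and> coprime m n \<and> n \<le> m"
proof -
  have odd_a: "odd a" using assms(2,3) by fastforce
  have odd_c: "odd c"
  proof
    assume "even c"
    then have "even (a^2 + b^2)" using assms(1) by simp
    with odd_a assms(3) show False by simp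
  qed
  have "a \<le> c" using assms(1) by (metis le_add1 power2_nat_le_eq_le)
  obtain w where w: "b = 2 * w" using assms(3) by blast
  define p where "p = (c + a) div 2"
  define q where "q = (c - a) div 2"
  have c_a: "c = p + q" "a = p - q" "q \<le> p"
    using odd_a odd_c \<open>a \<le> c\<close> by (auto simp: p_def q_def elim!: oddE)
  have "(2 * p) * (2 * q) = c^2 - a^2"
  proof -
    obtain t where "p = q + t" using c_a(3) le_Suc_ex by blast
    then show ?thesis using c_a(1,2) by (simp add: power2_eq_square algebra_simps)
  qed
  also have "\<dots> = (2 * w)^2" using assms(1) w by simp
  finally have pq: "p * q = w^2" by (simp add: power2_eq_square)
  have "coprime p q"
  proof (rule coprimeI)
    fix d assume "d dvd p" "d dvd q"
    then have "d dvd c" "d dvd a" using c_a by (auto simp: dvd_diff_nat)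
    with pythagorean_coprime_hypotenuse[OF assms(1,2)] show "is_unit d"
      using coprime_common_divisor by blast
  qed
  then obtain m n where mn: "p = m^2" "q = n^2"
    using coprime_mult_eq_square_nat[OF _ pq] by blast
  have "b^2 = (2 * m * n)^2" using pq w mn by (simp add: power2_eq_square algebra_simps)
  then have "b = 2 * m * n" by (simp add: power2_eq_iff)
  moreover have "coprime m n" using \<open>coprime p q\<close> mn by simp
  moreover have "n \<le> m" using c_a(3) mn by (simp add: power2_nat_le_eq_le)
  ultimately show ?thesis using c_a mn by auto
qed

lemma square_mod_4_nat: "(n::nat)^2 mod 4 = (if even n then 0 else 1)"
proof (cases "even n")
  case True
  then show ?thesis by (auto simp: power2_eq_square)
next
  case False
  then obtain k where "n = 2 * k + 1" using oddE by blast
  then have "n^2 = 4 * (k * k + k) + 1" by (simp add: power2_eq_square algebra_simps)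
  with False show ?thesis by simp
qed

lemma fourth_power_eq_descent_gcd:
  fixes x y z :: nat
  assumes "\<not> coprime x y" "x^4 = y^4 + z^2" "0 < y" "0 < z"
  shows "\<exists>x' y' z'. x' < x \<and> x'^4 = y'^4 + z'^2 \<and> 0 < y' \<and> 0 < z'"
proof -
  define d where "d = gcd x y"
  have "x^4 \<noteq> 0" using assms(2,3) by simp
  then have "0 < x" by simp
  then have "1 < d" using assms(1) unfolding d_def
    by (metis coprime_iff_gcd_eq_1 gcd_pos_nat less_one nat_neq_iff)
  obtain x' y' where xy: "x = d * x'" "y = d * y'"
    unfolding d_def by (meson gcd_dvd1 gcd_dvd2 dvdE)
  have eq: "d^4 * x'^4 = d^4 * y'^4 + z^2" using assms(2) xy by (simp add: power_mult_distrib)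
  then have "d^4 dvd z^2" by (metis dvd_add_right_iff dvd_triv_left)
  then have "(d^2)^2 dvd z^2" by (simp add: power_mult[symmetric])
  then have "d^2 dvd z" using pow_divides_pow_iff[of 2 "d^2" z] by simp
  then obtain z' where z': "z = d^2 * z'" by blast
  have "d^4 * x'^4 = d^4 * (y'^4 + z'^2)"
    using eq z' by (simp add: power_mult_distrib power_mult[symmetric] algebra_simps)
  then have "x'^4 = y'^4 + z'^2" using \<open>1 < d\<close> by simp
  moreover have "x' < x" using xy \<open>1 < d\<close> \<open>0 < x\<close> by simp
  moreover have "0 < y'" "0 < z'" using assms(3,4) xy z' by auto
  ultimately show ?thesis by blast
qed

lemma fourth_power_eq_coprime_square:
  fixes x y z :: nat
  assumes "coprime x y" "x^4 = y^4 + z^2"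
  shows "coprime (y^2) z"
proof (rule coprimeI)
  fix d assume d: "d dvd y^2" "d dvd z"
  then have "d dvd y^4" "d dvd z^2" by (auto simp: power2_eq_square numeral_eq_Suc)
  then have "d dvd x^4" using assms(2) by simp
  moreover have "coprime (x^4) (y^2)" using assms(1) by simp
  ultimately show "is_unit d" using d(1) coprime_common_divisor by blast
qed

lemma fourth_power_eq_descent_odd:
  fixes x y z :: nat
  assumes "coprime x y" "odd y" "x^4 = y^4 + z^2" "0 < z"
  shows "\<exists>x' y' z'. x' < x \<and> x'^4 = y'^4 + z'^2 \<and> 0 < y' \<and> 0 < z'"
proof -
  have eq: "(y^2)^2 + z^2 = (x^2)^2" using assms(3) by (simp add: power_mult[symmetric])
  have "even z"
  proof (rule ccontr)
    assume "odd z"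
    have "(x^2)^2 mod 4 = ((y^2)^2 mod 4 + z^2 mod 4) mod 4" using eq by (metis mod_add_eq)
    also have "\<dots> = 2"
      using \<open>odd y\<close> \<open>odd z\<close> square_mod_4_nat[of "y^2"] square_mod_4_nat[of z] by simp
    finally show False using square_mod_4_nat[of "x^2"] by (simp split: if_splits)
  qed
  then obtain m n where mn: "y^2 = m^2 - n^2" "z = 2 * m * n" "x^2 = m^2 + n^2" "n \<le> m"
    using primitive_pythagorean_triple[OF eq fourth_power_eq_coprime_square[OF assms(1,3)]]
    by blast
  have "0 < n" "0 < m" using mn(2) assms(4) by auto
  have "n^2 \<le> m^2" using mn(4) by (simp add: power_mono)
  then obtain t where "m^2 = n^2 + t" using le_Suc_ex by blast
  then have "m^2 * m^2 = n^2 * n^2 + (m^2 - n^2) * (m^2 + n^2)" by (simp add: algebra_simps)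
  then have "m^4 = n^4 + (x * y)^2"
    using mn by (simp add: power_mult_distrib power_mult[symmetric] mult_ac)
  moreover have "m < x"
    using mn(3) \<open>0 < n\<close> power_less_imp_less_base[of m 2 x] by simp
  moreover have "0 < x * y" using odd_pos[OF assms(2)] \<open>m < x\<close> by simp
  ultimately show ?thesis using \<open>0 < n\<close> by blast
qed

text \<open>\<open>p\<close> and \<open>e/2\<close> are coprime with square product, hence squares \<open>s\<^sup>2, r\<^sup>2\<close>; writing the
  primitive triple \<open>(s\<^sup>2, 2r\<^sup>2, x)\<close> as \<open>(u\<^sup>2 - v\<^sup>2, 2uv, u\<^sup>2 + v\<^sup>2)\<close> makes \<open>u, v\<close> squares \<open>a\<^sup>2, b\<^sup>2\<close>,
  and then \<open>a\<^sup>4 = b\<^sup>4 + s\<^sup>2\<close>.\<close>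

lemma fourth_power_eq_descent_primitive_leg:
  fixes x y p e :: nat
  assumes "coprime p e" "even e" "0 < p" "0 < e" "2 * p * e = y^2" "x^2 = p^2 + e^2"
  shows "\<exists>x' y' z'. x' < x \<and> x'^4 = y'^4 + z'^2 \<and> 0 < y' \<and> 0 < z'"
proof -
  obtain k where k: "e = 2 * k" using assms(2) by blast
  have "even (y^2)" using assms(5) by (metis dvd_triv_left mult.assoc)
  then obtain w where "y = 2 * w" by auto
  then have "p * k = w^2" using assms(5) k by (simp add: power2_eq_square algebra_simps)
  moreover have "coprime p k" using assms(1) k by simp
  ultimately obtain s r where sr: "p = s^2" "k = r^2"
    using coprime_mult_eq_square_nat by blast
  have eq: "(s^2)^2 + (2 * r^2)^2 = x^2" using assms(6) sr k by simp
  have "coprime (s^2) (2 * r^2)" using assms(1) sr k by simp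
  then obtain u v where uv: "s^2 = u^2 - v^2" "r^2 = u * v" "x = u^2 + v^2" "coprime u v" "v \<le> u"
    using primitive_pythagorean_triple[OF eq] by auto
  have "0 < r" "0 < s" using assms(3,4) k sr by (auto simp: gr0I)
  then have "0 < u * v" using uv(2) by (metis zero_less_power)
  then have "0 < u" "0 < v" by simp_all
  obtain a b where ab: "u = a^2" "v = b^2"
    using coprime_mult_eq_square_nat[OF uv(4) uv(2)[symmetric]] by blast
  have "u^2 = v^2 + s^2" using uv(1,5) by (simp add: power_mono)
  then have "a^4 = b^4 + s^2" using ab by (simp add: power_mult[symmetric])
  moreover have "0 < a" "0 < b" using \<open>0 < u\<close> \<open>0 < v\<close> ab by (auto simp: gr0I)
  moreover have "a < x"
  proof -
    have "a \<le> a^4" using \<open>0 < a\<close> by (simp add: self_le_power)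
    also have "\<dots> = u^2" using ab by (simp add: power_mult[symmetric])
    also have "\<dots> < x" using uv(3) \<open>0 < v\<close> by simp
    finally show ?thesis .
  qed
  ultimately show ?thesis using \<open>0 < s\<close> by blast
qed

lemma fourth_power_eq_descent_even:
  fixes x y z :: nat
  assumes "coprime x y" "even y" "x^4 = y^4 + z^2" "0 < y"
  shows "\<exists>x' y' z'. x' < x \<and> x'^4 = y'^4 + z'^2 \<and> 0 < y' \<and> 0 < z'"
proof -
  have coprime: "coprime z (y^2)"
    using fourth_power_eq_coprime_square[OF assms(1,3)] by (simp add: coprime_commute)
  have eq: "z^2 + (y^2)^2 = (x^2)^2" using assms(3) by (simp add: power_mult[symmetric])
  obtain m n where mn: "y^2 = 2 * m * n" "x^2 = m^2 + n^2" "coprime m n"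
    using primitive_pythagorean_triple[OF eq coprime] assms(2) by auto
  have "0 < 2 * m * n" using mn(1) assms(4) by (metis zero_less_power)
  then have "0 < m" "0 < n" by simp_all
  have "4 dvd y^2" using assms(2) by (auto simp: power2_eq_square)
  then have "even (m * n)" using mn(1) by (auto simp: mult.assoc)
  then consider "even n" | "even m" by auto
  then show ?thesis
  proof cases
    case 1
    then show ?thesis
      using fourth_power_eq_descent_primitive_leg[of m n y x] mn \<open>0 < m\<close> \<open>0 < n\<close> by auto
  next
    case 2
    then show ?thesis
      using fourth_power_eq_descent_primitive_leg[of n m y x] mn \<open>0 < m\<close> \<open>0 < n\<close>
      by (auto simp: coprime_commute add.commute mult_ac)
  qed
qed

theorem fourth_power_diff_not_square_nat:
  fixes x y z :: nat
  assumes "x^4 = y^4 + z^2" "0 < y" "0 < z"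
  shows False
  using assms
proof (induction x arbitrary: y z rule: less_induct)
  case (less x)
  have "\<exists>x' y' z'. x' < x \<and> x'^4 = y'^4 + z'^2 \<and> 0 < y' \<and> 0 < z'"
    using fourth_power_eq_descent_gcd fourth_power_eq_descent_odd fourth_power_eq_descent_even
      less.prems by blast
  then show False using less.IH by blast
qed

theorem fourth_power_diff_not_square_Rats:
  fixes a b c :: real
  assumes "a \<in> \<rat>" "b \<in> \<rat>" "c \<in> \<rat>" "b \<noteq> 0" "c \<noteq> 0" "a^4 = b^4 + c^2"
  shows False
proof -
  obtain i p where ip: "p \<noteq> 0" "\<bar>a\<bar> = real i / real p" using Rats_abs_nat_div_natE[OF assms(1)] by metis
  obtain j q where jq: "q \<noteq> 0" "\<bar>b\<bar> = real j / real q" using Rats_abs_nat_div_natE[OF assms(2)] by metis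
  obtain k r where kr: "r \<noteq> 0" "\<bar>c\<bar> = real k / real r" using Rats_abs_nat_div_natE[OF assms(3)] by metis
  define x where "x = i * q * r"
  define y where "y = p * j * r"
  define z where "z = p * q * r * p * q * k"
  have "real x = real (p * q * r) * \<bar>a\<bar>" "real y = real (p * q * r) * \<bar>b\<bar>"
       "real z = real (p * q * r)^2 * \<bar>c\<bar>"
    using ip jq kr by (simp_all add: x_def y_def z_def field_simps power2_eq_square)
  moreover have "\<bar>a\<bar>^4 = \<bar>b\<bar>^4 + \<bar>c\<bar>^2" using assms(6) by (simp add: power_even_abs_numeral)
  ultimately have "real (x^4) = real (y^4 + z^2)"
    by (simp add: power_mult_distrib power_mult[symmetric] algebra_simps)
  then have eq: "x^4 = y^4 + z^2" by (simp only: of_nat_eq_iff)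
  have "0 < j" using jq(2) assms(4) by (cases "j = 0") auto
  moreover have "0 < k" using kr(2) assms(5) by (cases "k = 0") auto
  ultimately have "0 < y" "0 < z" using ip jq kr by (simp_all add: y_def z_def)
  with eq show False by (rule fourth_power_diff_not_square_nat)
qed

lemma diagonal_ratios_eq_iff:
  fixes u \<alpha> :: real
  assumes "0 < \<alpha>" "\<alpha> < pi / 4" "0 < u"
  shows "(cos \<alpha> - sin \<alpha>) / (2 * u * cot (2 * \<alpha>)) = 2 * u * cot (2 * \<alpha>) / (cos \<alpha> + sin \<alpha>)
     \<longleftrightarrow> sin (2 * \<alpha>)^2 = 4 * u^2 * cos (2 * \<alpha>)"
proof -
  define c where "c = cos (2 * \<alpha>)"
  define s where "s = sin (2 * \<alpha>)"
  define k where "k = 2 * u * cot (2 * \<alpha>)"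
  have "0 < c" "0 < s" using assms(1,2) by (auto simp: c_def s_def intro!: cos_gt_zero sin_gt_zero)
  have "0 < cos \<alpha> + sin \<alpha>" using assms(1,2) by (auto intro!: add_pos_pos cos_gt_zero sin_gt_zero)
  have k: "k = 2 * u * c / s" by (simp add: k_def cot_def c_def s_def)
  with \<open>0 < c\<close> \<open>0 < s\<close> assms(3) have "k \<noteq> 0" by simp
  have c: "(cos \<alpha> - sin \<alpha>) * (cos \<alpha> + sin \<alpha>) = c"
    unfolding c_def cos_double by (simp add: power2_eq_square algebra_simps)
  have "(cos \<alpha> - sin \<alpha>) / k = k / (cos \<alpha> + sin \<alpha>) \<longleftrightarrow> c = k * k"
    using frac_eq_eq[OF \<open>k \<noteq> 0\<close>, of "cos \<alpha> + sin \<alpha>"] \<open>0 < cos \<alpha> + sin \<alpha>\<close> c by simp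
  also have "\<dots> \<longleftrightarrow> c * s^2 = c * (4 * u^2 * c)"
    unfolding k using \<open>0 < s\<close> by (simp add: power2_eq_square field_simps)
  also have "\<dots> \<longleftrightarrow> s^2 = 4 * u^2 * c" using \<open>0 < c\<close> by simp
  finally show ?thesis by (simp add: c_def s_def k_def)
qed

lemma double_angle_rational_parametrization:
  fixes m \<alpha> :: real
  assumes "cos \<alpha> = (1 - m^2) / (1 + m^2)" "sin \<alpha> = 2 * m / (1 + m^2)"
  shows "sin (2 * \<alpha>) = 2 * (1 - m^2) * (2 * m) / ((1 - m^2)^2 + (2 * m)^2)"
    and "cos (2 * \<alpha>) = ((1 - m^2)^2 - (2 * m)^2) / ((1 - m^2)^2 + (2 * m)^2)"
proof -
  have d: "(1 - m^2)^2 + (2 * m)^2 = (1 + m^2)^2" by (simp add: power2_eq_square algebra_simps)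
  show "sin (2 * \<alpha>) = 2 * (1 - m^2) * (2 * m) / ((1 - m^2)^2 + (2 * m)^2)"
    unfolding sin_double assms d by (simp add: power2_eq_square)
  show "cos (2 * \<alpha>) = ((1 - m^2)^2 - (2 * m)^2) / ((1 - m^2)^2 + (2 * m)^2)"
    unfolding cos_double assms d power_divide by (simp add: diff_divide_distrib)
qed

lemma sin_double_sq_neq_rational_mult_cos_double:
  fixes u m \<alpha> :: real
  assumes "u \<in> \<rat>" "0 < u" "m \<in> \<rat>" "0 < m" "m < 1"
    and "cos \<alpha> = (1 - m^2) / (1 + m^2)" "sin \<alpha> = 2 * m / (1 + m^2)"
  shows "sin (2 * \<alpha>)^2 \<noteq> 4 * u^2 * cos (2 * \<alpha>)"
proof
  assume eq: "sin (2 * \<alpha>)^2 = 4 * u^2 * cos (2 * \<alpha>)"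
  define a where "a = 1 - m^2"
  define b where "b = 2 * m"
  define d where "d = a^2 + b^2"
  have "0 < a" "0 < b" using assms(4,5) by (simp_all add: a_def b_def power_less_one_iff)
  then have "0 < d" by (simp add: d_def add_nonneg_pos)
  have "4 * (a * b)^2 / d^2 = 4 * u^2 * (a^2 - b^2) / d"
    using eq unfolding double_angle_rational_parametrization[OF assms(6,7), folded a_def b_def]
    by (simp add: d_def power_divide power_mult_distrib mult.assoc)
  then have "(a * b)^2 = u^2 * (a^2 - b^2) * d"
    using \<open>0 < d\<close> by (simp add: field_simps power2_eq_square)
  then have "a^4 = b^4 + (a * b / u)^2"
    using \<open>0 < u\<close> by (simp add: d_def field_simps power2_eq_square power4_eq_xxxx)
  moreover have "a \<in> \<rat>" "b \<in> \<rat>" "a * b / u \<in> \<rat>" using assms(1,3) by (simp_all add: a_def b_def)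
  moreover have "b \<noteq> 0" "a * b / u \<noteq> 0" using \<open>0 < a\<close> \<open>0 < b\<close> \<open>0 < u\<close> by simp_all
  ultimately show False by (intro fourth_power_diff_not_square_Rats)
qed

theorem theorem2:
  fixes s1 m \<alpha> :: real
  assumes "s1 \<in> \<rat>" and "0 < s1" and "s1 < 1"
    and "m \<in> \<rat>" and "0 < m" and "m < sqrt 2 - 1"
    and "0 < \<alpha>" and "\<alpha> < pi / 4"
    and "cos \<alpha> = (1 - m\<^sup>2) / (1 + m\<^sup>2)"
    and "sin \<alpha> = 2 * m / (1 + m\<^sup>2)"
  shows "let u1 = (1 - s1\<^sup>2) / (2 * s1);
             s2 = 2 * u1 * cot (2 * \<alpha>);
             s3 = (cos \<alpha> - sin \<alpha>) / s2;
             s4 = s2 / (cos \<alpha> + sin \<alpha>)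
         in s3 \<noteq> s4"
proof -
  define u where "u = (1 - s1\<^sup>2) / (2 * s1)"
  have "0 < u" using assms(2,3) by (simp add: u_def power_less_one_iff)
  moreover have "u \<in> \<rat>" using assms(1) by (simp add: u_def)
  moreover have "m < 1" using assms(6) sqrt2_less_2 by linarith
  ultimately have "sin (2 * \<alpha>)^2 \<noteq> 4 * u^2 * cos (2 * \<alpha>)"
    using sin_double_sq_neq_rational_mult_cos_double assms(4,5,9,10) by blast
  then show ?thesis
    using diagonal_ratios_eq_iff[OF assms(7,8) \<open>0 < u\<close>] by (simp add: Let_def u_def)
qed

end
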